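(* Let $L/K$ be a totally and tamely ramified finite Galois extension of complete local fields with finite residue fields, let $e=[L:K]$ and $G=\mathrm{Gal}(L/K)$, and let $\pi_L,\pi_K$ be uniformizers of $L,K$ with $\pi_L^e=\pi_K$. Every $\alpha\in\mathcal{O}_L$ can be written uniquely as $\alpha=u_0+u_1\pi_L+\dots+u_{e-1}\pi_L^{e-1}$ with $u_i\in\mathcal{O}_K$. For $n\in\mathbb{Z}$, $\pi_L^n\alpha$ is a free generator of $\mathfrak{P}_L^n$ over $\mathcal{O}_K[G]$ if and only if $u_i\in\mathcal{O}_K^\times$ for all $i=0,\dots,e-1$; in particular this holds for $\alpha=1+\pi_L+\dots+\pi_L^{e-1}$.
   Context: A complete local field is a field complete with respect to a non-trivial discrete valuation. Uniformizers $\pi_L,\pi_K$ with $\pi_L^e=\pi_K$ always exist in this situation. *)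

theory Defs
  imports Complex_Main
begin

text \<open>The big field L is the whole type 'a; K is a subfield given as a subset.
  v is the normalized discrete valuation of L (values on nonzero elements only).\<close>

definition normalized_dvf :: "('a::field \<Rightarrow> int) \<Rightarrow> bool" where
  "normalized_dvf v \<longleftrightarrow>
     (\<forall>x y. x \<noteq> 0 \<longrightarrow> y \<noteq> 0 \<longrightarrow> v (x * y) = v x + v y) \<and>
     (\<forall>x y. x \<noteq> 0 \<longrightarrow> y \<noteq> 0 \<longrightarrow> x + y \<noteq> 0 \<longrightarrow> v (x + y) \<ge> min (v x) (v y)) \<and>
     (\<forall>n. \<exists>x. x \<noteq> 0 \<and> v x = n)"

definition subfield :: "'a::field set \<Rightarrow> bool" where
  "subfield K \<longleftrightarrow> 0 \<in> K \<and> 1 \<in> K \<and>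
     (\<forall>x\<in>K. \<forall>y\<in>K. x + y \<in> K \<and> x - y \<in> K \<and> x * y \<in> K) \<and>
     (\<forall>x\<in>K. inverse x \<in> K)"

definition val_ring :: "('a::field \<Rightarrow> int) \<Rightarrow> 'a set \<Rightarrow> 'a set" where
  "val_ring v S = {x \<in> S. x = 0 \<or> v x \<ge> 0}"

definition max_ideal :: "('a::field \<Rightarrow> int) \<Rightarrow> 'a set \<Rightarrow> 'a set" where
  "max_ideal v S = {x \<in> S. x = 0 \<or> v x > 0}"

definition val_units :: "('a::field \<Rightarrow> int) \<Rightarrow> 'a set \<Rightarrow> 'a set" where
  "val_units v S = {x \<in> S. x \<noteq> 0 \<and> v x = 0}"

definition ideal_pow :: "('a::field \<Rightarrow> int) \<Rightarrow> int \<Rightarrow> 'a set" where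
  "ideal_pow v n = {x. x = 0 \<or> v x \<ge> n}"

definition finite_residue_field :: "('a::field \<Rightarrow> int) \<Rightarrow> 'a set \<Rightarrow> bool" where
  "finite_residue_field v S \<longleftrightarrow>
     finite (val_ring v S // {(x, y). x \<in> val_ring v S \<and> y \<in> val_ring v S \<and> x - y \<in> max_ideal v S})"

definition v_cauchy :: "('a::field \<Rightarrow> int) \<Rightarrow> (nat \<Rightarrow> 'a) \<Rightarrow> bool" where
  "v_cauchy v X \<longleftrightarrow> (\<forall>N::int. \<exists>M. \<forall>m\<ge>M. \<forall>k\<ge>M. X m = X k \<or> v (X m - X k) \<ge> N)"

definition v_converges :: "('a::field \<Rightarrow> int) \<Rightarrow> (nat \<Rightarrow> 'a) \<Rightarrow> 'a \<Rightarrow> bool" where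
  "v_converges v X l \<longleftrightarrow> (\<forall>N::int. \<exists>M. \<forall>m\<ge>M. X m = l \<or> v (X m - l) \<ge> N)"

definition v_complete :: "('a::field \<Rightarrow> int) \<Rightarrow> 'a set \<Rightarrow> bool" where
  "v_complete v S \<longleftrightarrow> (\<forall>X. (\<forall>m. X m \<in> S) \<longrightarrow> v_cauchy v X \<longrightarrow> (\<exists>l\<in>S. v_converges v X l))"

definition uniformizer :: "('a::field \<Rightarrow> int) \<Rightarrow> 'a set \<Rightarrow> 'a \<Rightarrow> bool" where
  "uniformizer v S p \<longleftrightarrow> p \<in> S \<and> p \<noteq> 0 \<and> v p > 0 \<and>
     (\<forall>x\<in>S. x \<noteq> 0 \<longrightarrow> v x > 0 \<longrightarrow> v p \<le> v x)"

definition ext_degree :: "'a::field set \<Rightarrow> nat \<Rightarrow> bool" where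
  "ext_degree K d \<longleftrightarrow> (\<exists>b::nat \<Rightarrow> 'a. \<forall>x. \<exists>!c. (\<forall>i<d. c i \<in> K) \<and> (\<forall>i\<ge>d. c i = 0) \<and>
       x = (\<Sum>i<d. c i * b i))"

definition field_aut :: "('a::field \<Rightarrow> 'a) \<Rightarrow> bool" where
  "field_aut \<sigma> \<longleftrightarrow> bij \<sigma> \<and> (\<forall>x y. \<sigma> (x + y) = \<sigma> x + \<sigma> y \<and> \<sigma> (x * y) = \<sigma> x * \<sigma> y) \<and> \<sigma> 1 = 1"

definition Gal :: "'a::field set \<Rightarrow> ('a \<Rightarrow> 'a) set" where
  "Gal K = {\<sigma>. field_aut \<sigma> \<and> (\<forall>x\<in>K. \<sigma> x = x)}"

definition galois_ext :: "'a::field set \<Rightarrow> nat \<Rightarrow> bool" where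
  "galois_ext K d \<longleftrightarrow> ext_degree K d \<and> finite (Gal K) \<and> card (Gal K) = d"

definition ram_index :: "('a::field \<Rightarrow> int) \<Rightarrow> 'a set \<Rightarrow> nat" where
  "ram_index v K = nat (v (SOME p. uniformizer v K p))"

definition totally_ramified :: "('a::field \<Rightarrow> int) \<Rightarrow> 'a set \<Rightarrow> nat \<Rightarrow> bool" where
  "totally_ramified v K d \<longleftrightarrow> ram_index v K = d"

text \<open>Tame: the residue characteristic does not divide the ramification index,
  i.e. the image of the integer e in O_L is a unit.\<close>
definition tamely_ramified :: "('a::field \<Rightarrow> int) \<Rightarrow> 'a set \<Rightarrow> bool" where
  "tamely_ramified v K \<longleftrightarrow> of_nat (ram_index v K) \<in> val_units v (UNIV :: 'a set)"

text \<open>x is a free generator of the O_K[G]-module P_L^n: the map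
  O_K[G] \<rightarrow> P_L^n, \<Sum> a_\<sigma> \<sigma> \<mapsto> \<Sum> a_\<sigma> \<sigma>(x) is well-defined and bijective.\<close>
definition free_generator :: "('a::field \<Rightarrow> int) \<Rightarrow> 'a set \<Rightarrow> ('a \<Rightarrow> 'a) set \<Rightarrow> int \<Rightarrow> 'a \<Rightarrow> bool" where
  "free_generator v K G n x \<longleftrightarrow>
     (\<forall>a. (\<forall>\<sigma>\<in>G. a \<sigma> \<in> val_ring v K) \<longrightarrow> (\<Sum>\<sigma>\<in>G. a \<sigma> * \<sigma> x) \<in> ideal_pow v n) \<and>
     (\<forall>y\<in>ideal_pow v n. \<exists>!a. (\<forall>\<sigma>\<in>G. a \<sigma> \<in> val_ring v K) \<and> (\<forall>\<sigma>. \<sigma> \<notin> G \<longrightarrow> a \<sigma> = 0) \<and>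
        y = (\<Sum>\<sigma>\<in>G. a \<sigma> * \<sigma> x))"

end

theory Submission
  imports "HOL-Computational_Algebra.Polynomial" "HOL-Algebra.Embedded_Algebras" Defs
begin

(* Let L/K be totally and tamely ramified Galois of degree e, with pi_L ^ e = pi_K.
   (1) Valuations of K lie in eZ, so the terms of  sum u_i pi_L^i  (u_i in K) have pairwise
       distinct valuations; hence 1, pi_L, ..., pi_L^(e-1) are K-independent, thus a K-basis
       (dimension count via HOL-Algebra), and integral elements have integral coordinates.
   (2) For sigma in G, zeta sigma = sigma(pi_L)/pi_L is an e-th root of unity.  Tameness forces
       zeta sigma to be fixed by G (a principal unit of order dividing e is 1), so zeta is an
       injective character G -> K^*, with orthogonality relations and values in K.
   (3) In coordinates, a in O_K[G] acts on pi_L^n * sum u_i pi_L^i by multiplying the i-th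
       coordinate with dft n a i = sum_sigma a sigma * zeta sigma ^ (n+i).  This discrete Fourier
       transform is invertible over O_K since e and all zeta sigma are units, so the action map
       O_K[G] -> P_L^n is bijective when every u_i is a unit; conversely, if pi_L^(n+k) is
       reached by a, then u_k * dft n a k = 1 with both factors integral, so u_k is a unit. *)

text \<open>A field type viewed as an HOL-Algebra ring, so that the dimension theory of
  Embedded_Algebras (spans and independent families over a subfield) applies.\<close>
definition field_ring :: "'a::field ring" where
  "field_ring = \<lparr>carrier = UNIV, monoid.mult = (*), one = 1, ring.zero = 0, add = (+)\<rparr>"

lemma field_ring_simps [simp]:
  "carrier field_ring = UNIV" "mult field_ring = (*)" "one field_ring = 1"
  "zero field_ring = 0" "add field_ring = (+)"
  by (auto simp: field_ring_def)

lemma field_ring_is_field: "field (field_ring :: 'a::field ring)"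
proof -
  have "\<exists>y. x + y = 0" for x :: 'a
    using add.right_inverse by blast
  moreover have "x \<noteq> 0 \<Longrightarrow> \<exists>y. x * y = 1" for x :: 'a
    by (rule exI[of _ "inverse x"]) auto
  ultimately show ?thesis
    unfolding field_ring_def using add.right_inverse
    by unfold_locales (auto simp: algebra_simps Units_def)
qed

lemma field_ring_is_ring: "ring (field_ring :: 'a::field ring)"
  using field_ring_is_field field.is_ring by blast

lemma field_ring_subfield:
  assumes "Defs.subfield (K::'a::field set)"
  shows "Subrings.subfield K field_ring"
proof -
  interpret field field_ring by (rule field_ring_is_field)
  have minus: "\<ominus>\<^bsub>field_ring\<^esub> x = - x" for x :: 'a
    using minus_equality[of "- x" x] by (simp add: a_comm)
  have "subring K field_ring"
    using assms by (intro subringI) (auto simp: Defs.subfield_def minus)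
  moreover have "Units (field_ring\<lparr>carrier := K\<rparr>) = K - {0}"
  proof
    show "K - {0} \<subseteq> Units (field_ring\<lparr>carrier := K\<rparr>)"
    proof
      fix x assume x: "x \<in> K - {0}"
      hence "inverse x \<in> K" using assms by (simp add: Defs.subfield_def)
      with x show "x \<in> Units (field_ring\<lparr>carrier := K\<rparr>)"
        unfolding Units_def by (auto simp: field_ring_def intro!: bexI[of _ "inverse x"])
    qed
  qed (auto simp: Units_def)
  ultimately show ?thesis
    by (intro subfieldI subcringI') simp_all
qed


lemma field_ring_combine:
  "ring.combine field_ring Ks Us = (\<Sum>i<min (length Ks) (length Us). Ks!i * Us!i)"
proof (induction Ks arbitrary: Us)
  case Nil then show ?case by (simp add: ring.combine.simps[OF field_ring_is_ring])
next
  case (Cons k Ks)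
  show ?case
  proof (cases Us)
    case Nil then show ?thesis by (simp add: ring.combine.simps[OF field_ring_is_ring])
  next
    case (Cons u Us')
    have "(\<Sum>i<min (length (k#Ks)) (length (u#Us')). (k#Ks)!i * (u#Us')!i)
      = k * u + (\<Sum>i<min (length Ks) (length Us'). Ks!i * Us'!i)"
      by (simp add: lessThan_Suc_eq_insert_0 sum.reindex)
    then show ?thesis
      using Cons.IH[of Us'] Cons by (simp add: ring.combine.simps[OF field_ring_is_ring])
  qed
qed

lemma span_iff_combination:
  assumes "Defs.subfield K"
  shows "x \<in> ring.Span field_ring K (map f [0..<e]) \<longleftrightarrow>
    (\<exists>c. (\<forall>i<e. c i \<in> K) \<and> (\<forall>i\<ge>e. c i = 0) \<and> x = (\<Sum>i<e. c i * f i))"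
proof -
  have "x \<in> ring.Span field_ring K (map f [0..<e]) \<longleftrightarrow>
     (\<exists>Ks. set Ks \<subseteq> K \<and> length Ks = e \<and> x = ring.combine field_ring Ks (map f [0..<e]))"
    using ring.Span_mem_iff_length_version[OF field_ring_is_ring field_ring_subfield[OF assms]]
    by simp
  also have "\<dots> \<longleftrightarrow> (\<exists>c. (\<forall>i<e. c i \<in> K) \<and> (\<forall>i\<ge>e. c i = 0) \<and> x = (\<Sum>i<e. c i * f i))"
  proof
    assume "\<exists>Ks. set Ks \<subseteq> K \<and> length Ks = e \<and> x = ring.combine field_ring Ks (map f [0..<e])"
    then obtain Ks where "set Ks \<subseteq> K" "length Ks = e" "x = ring.combine field_ring Ks (map f [0..<e])"
      by blast
    then show "\<exists>c. (\<forall>i<e. c i \<in> K) \<and> (\<forall>i\<ge>e. c i = 0) \<and> x = (\<Sum>i<e. c i * f i)"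
      by (intro exI[of _ "\<lambda>i. if i < e then Ks!i else 0"]) (auto simp: field_ring_combine)
  next
    assume "\<exists>c. (\<forall>i<e. c i \<in> K) \<and> (\<forall>i\<ge>e. c i = 0) \<and> x = (\<Sum>i<e. c i * f i)"
    then obtain c where "\<forall>i<e. c i \<in> K" "x = (\<Sum>i<e. c i * f i)" by blast
    then show "\<exists>Ks. set Ks \<subseteq> K \<and> length Ks = e \<and> x = ring.combine field_ring Ks (map f [0..<e])"
      by (intro exI[of _ "map c [0..<e]"]) (auto simp: field_ring_combine)
  qed
  finally show ?thesis .
qed

lemma independent_if_only_trivial_relation:
  assumes K: "Defs.subfield K"
    and triv: "\<And>c. (\<forall>i<e. c i \<in> K) \<Longrightarrow> (\<Sum>i<e. c i * f i) = 0 \<Longrightarrow> (\<forall>i<e. c i = 0)"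
  shows "ring.independent field_ring K (map f [0..<e])"
proof (rule ring.trivial_combine_imp_independent[OF field_ring_is_ring field_ring_subfield[OF K]])
  show "set (map f [0..<e]) \<subseteq> carrier field_ring" by simp
  fix Ks assume Ks: "set Ks \<subseteq> K" "ring.combine field_ring Ks (map f [0..<e]) = \<zero>\<^bsub>field_ring\<^esub>"
  define m where "m = min (length Ks) e"
  define c where "c i = (if i < m then Ks!i else 0)" for i
  have "(\<Sum>i<e. c i * f i) = (\<Sum>i<m. c i * f i)"
    by (rule sum.mono_neutral_right) (auto simp: c_def m_def)
  also have "\<dots> = 0" using Ks(2) by (simp add: field_ring_combine m_def c_def)
  finally have "\<forall>i<e. c i = 0"
    using Ks(1) K by (intro triv) (auto simp: c_def m_def Defs.subfield_def)
  then show "set (take (length (map f [0..<e])) Ks) \<subseteq> {\<zero>\<^bsub>field_ring\<^esub>}"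
    by (auto simp: c_def m_def set_conv_nth)
qed

lemma ext_degree_basis:
  assumes K: "Defs.subfield K" and deg: "ext_degree K e"
  obtains b where "ring.independent field_ring K (map b [0..<e])"
    and "\<And>y. y \<in> ring.Span field_ring K (map b [0..<e])"
proof -
  obtain b where b: "\<And>x. \<exists>!c. (\<forall>i<e. c i \<in> K) \<and> (\<forall>i\<ge>e. c i = 0) \<and> x = (\<Sum>i<e. c i * b i)"
    using deg unfolding ext_degree_def by blast
  have "\<forall>i<e. c i = 0" if c: "\<forall>i<e. c i \<in> K" "(\<Sum>i<e. c i * b i) = 0" for c
  proof -
    define coords where "coords d \<longleftrightarrow> (\<forall>i<e. d i \<in> K) \<and> (\<forall>i\<ge>e. d i = 0) \<and> 0 = (\<Sum>i<e. d i * b i)"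
      for d
    define c' where "c' i = (if i < e then c i else 0)" for i
    have "coords c'" using c by (simp add: coords_def c'_def)
    moreover have "coords (\<lambda>_. 0)" using K by (simp add: coords_def Defs.subfield_def)
    moreover have "\<exists>!d. coords d" using b[of 0] unfolding coords_def .
    ultimately have "c' = (\<lambda>_. 0)" by blast
    then show ?thesis by (metis c'_def)
  qed
  then have "ring.independent field_ring K (map b [0..<e])"
    by (rule independent_if_only_trivial_relation[OF K])
  moreover have "y \<in> ring.Span field_ring K (map b [0..<e])" for y
    unfolding span_iff_combination[OF K] using b[of y] by blast
  ultimately show thesis by (rule that)
qed

text \<open>If \<open>[L:K] = e\<close>, then any \<open>e\<close> elements of \<open>L\<close> that are linearly independent over \<open>K\<close>
  form a \<open>K\<close>-basis of \<open>L\<close> (a family one longer would be independent, contradicting the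
  exchange lemma).\<close>
lemma independent_family_spans:
  fixes K :: "'a::field set" and w :: "nat \<Rightarrow> 'a"
  assumes K: "Defs.subfield K" and deg: "ext_degree K e"
    and indep: "\<And>c. (\<forall>i<e. c i \<in> K) \<Longrightarrow> (\<Sum>i<e. c i * w i) = 0 \<Longrightarrow> (\<forall>i<e. c i = 0)"
  shows "\<exists>c. (\<forall>i<e. c i \<in> K) \<and> (\<forall>i\<ge>e. c i = 0) \<and> x = (\<Sum>i<e. c i * w i)"
proof (rule ccontr)
  obtain b where b: "ring.independent field_ring K (map b [0..<e])"
    "\<And>y. y \<in> ring.Span field_ring K (map b [0..<e])"
    using ext_degree_basis[OF K deg] by blast
  have w: "ring.independent field_ring K (map w [0..<e])"
    by (rule independent_if_only_trivial_relation[OF K indep])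
  assume "\<not> ?thesis"
  then have "x \<notin> ring.Span field_ring K (map w [0..<e])"
    unfolding span_iff_combination[OF K] .
  then have "ring.independent field_ring K (x # map w [0..<e])"
    using ring.li_Cons[OF field_ring_is_ring _ _ w] by simp
  then have "length (x # map w [0..<e]) \<le> length (map b [0..<e])"
    using ring.independent_length_le[OF field_ring_is_ring field_ring_subfield[OF K] _ b(1)] b(2)
    by blast
  then show False by simp
qed

lemma power_int_eq_1_abs: "z powi m = (1::'a::field) \<Longrightarrow> z ^ nat \<bar>m\<bar> = 1"
  by (cases "m \<ge> 0") (simp_all add: power_int_def power_inverse)

lemma roots_of_unity_card:
  assumes "i > 0"
  shows "finite {z::'a::field. z ^ i = 1}" "card {z::'a::field. z ^ i = 1} \<le> i"
proof -
  define p :: "'a poly" where "p = Polynomial.monom 1 i - 1"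
  have "degree (Polynomial.monom (1::'a) i + (- 1)) = i"
    using assms by (subst degree_add_eq_left) (simp_all add: degree_monom_eq)
  then have "degree p = i" by (simp add: p_def)
  then have "p \<noteq> 0" using assms by auto
  have "{z. z ^ i = 1} = {z. poly p z = 0}" by (simp add: p_def poly_monom)
  then show "finite {z::'a. z ^ i = 1}" "card {z::'a. z ^ i = 1} \<le> i"
    using card_poly_roots_bound[OF \<open>p \<noteq> 0\<close>] poly_roots_finite[OF \<open>p \<noteq> 0\<close>] \<open>degree p = i\<close>
    by simp_all
qed


text \<open>Elementary facts about a normalized discrete valuation \<open>v\<close> on a field (the value \<open>v 0\<close> is
  irrelevant), and the fractional ideals \<open>P n = {x. v x \<ge> n} \<union> {0}\<close>.\<close>
locale discrete_valuation =
  fixes v :: "'a::field \<Rightarrow> int"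
  assumes normalized: "normalized_dvf v"
begin

lemma val_mult: "x \<noteq> 0 \<Longrightarrow> y \<noteq> 0 \<Longrightarrow> v (x * y) = v x + v y"
  using normalized unfolding normalized_dvf_def by blast

lemma val_add: "x \<noteq> 0 \<Longrightarrow> y \<noteq> 0 \<Longrightarrow> x + y \<noteq> 0 \<Longrightarrow> v (x + y) \<ge> min (v x) (v y)"
  using normalized unfolding normalized_dvf_def by blast

lemma val_surj: "\<exists>x. x \<noteq> 0 \<and> v x = n"
  using normalized unfolding normalized_dvf_def by blast

lemma val_one [simp]: "v 1 = 0"
  using val_mult[of 1 1] by simp

lemma val_inverse: "x \<noteq> 0 \<Longrightarrow> v (inverse x) = - v x"
  using val_mult[of x "inverse x"] by simp

lemma val_divide: "x \<noteq> 0 \<Longrightarrow> y \<noteq> 0 \<Longrightarrow> v (x / y) = v x - v y"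
  by (simp add: divide_inverse val_mult val_inverse)

lemma val_power: "x \<noteq> 0 \<Longrightarrow> v (x ^ n) = int n * v x"
  by (induction n) (auto simp: val_mult algebra_simps)

lemma val_power_int: "x \<noteq> 0 \<Longrightarrow> v (x powi n) = n * v x"
  by (cases "n \<ge> 0") (auto simp: power_int_def val_power val_inverse)

lemma val_minus [simp]: "v (- x) = v x"
proof (cases "x = 0")
  case False
  have "v (-1) = 0" using val_mult[of "-1" "-1"] by simp
  then show ?thesis using val_mult[of "-1" x] False by simp
qed simp

lemma val_add_strict:
  assumes "x \<noteq> 0" "y \<noteq> 0" "v x < v y"
  shows "x + y \<noteq> 0" "v (x + y) = v x"
proof -
  show nz: "x + y \<noteq> 0"
  proof
    assume "x + y = 0"
    then have "y = - x" by (simp add: add_eq_0_iff)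
    then show False using assms by simp
  qed
  have "v (x + y) \<ge> v x" using val_add[OF assms(1,2) nz] assms(3) by simp
  moreover have "v x \<ge> min (v (x + y)) (v (- y))"
    using val_add[of "x + y" "- y"] nz assms by simp
  ultimately show "v (x + y) = v x" using assms by simp
qed

lemma val_sum_distinct:
  assumes "finite I" "I \<noteq> {}" "\<forall>i\<in>I. f i \<noteq> 0" "inj_on (\<lambda>i. v (f i)) I"
  shows "sum f I \<noteq> 0 \<and> v (sum f I) = Min ((\<lambda>i. v (f i)) ` I)"
  using assms
proof (induction I rule: finite_ne_induct)
  case (insert x F)
  have IH: "sum f F \<noteq> 0" "v (sum f F) = Min ((\<lambda>i. v (f i)) ` F)"
    using insert.IH insert.prems by (auto intro: inj_on_subset)
  have "Min ((\<lambda>i. v (f i)) ` F) \<in> (\<lambda>i. v (f i)) ` F"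
    using insert.hyps by (intro Min_in) auto
  then obtain j where j: "j \<in> F" "v (f j) = Min ((\<lambda>i. v (f i)) ` F)" by auto
  have "v (f x) \<noteq> v (f j)"
    using insert.prems(2) insert.hyps(3) j(1) unfolding inj_on_def by blast
  then have neq: "v (f x) \<noteq> v (sum f F)" using j IH by simp
  have fx: "f x \<noteq> 0" using insert.prems(1) by blast
  have "Min ((\<lambda>i. v (f i)) ` insert x F) = min (v (f x)) (v (sum f F))"
    using IH(2) insert.hyps by (simp add: Min_insert)
  moreover have "sum f (insert x F) = f x + sum f F" using insert.hyps by simp
  moreover consider "v (f x) < v (sum f F)" | "v (sum f F) < v (f x)" using neq by linarith
  then have "f x + sum f F \<noteq> 0 \<and> v (f x + sum f F) = min (v (f x)) (v (sum f F))"
  proof cases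
    case 1
    then show ?thesis using val_add_strict[OF fx IH(1) 1] by simp
  next
    case 2
    then show ?thesis using val_add_strict[OF IH(1) fx 2] by (simp add: add.commute)
  qed
  ultimately show ?case by simp
qed simp

abbreviation P :: "int \<Rightarrow> 'a set" where "P n \<equiv> ideal_pow v n"

lemma P_zero [simp]: "0 \<in> P n" by (simp add: ideal_pow_def)

lemma P_one [simp]: "1 \<in> P 0" by (simp add: ideal_pow_def)

lemma P_add: "x \<in> P n \<Longrightarrow> y \<in> P n \<Longrightarrow> x + y \<in> P n"
  unfolding ideal_pow_def using val_add[of x y]
  by (cases "x = 0"; cases "y = 0"; cases "x + y = 0") auto

lemma P_minus: "x \<in> P n \<Longrightarrow> - x \<in> P n"
  unfolding ideal_pow_def by auto

lemma P_diff: "x \<in> P n \<Longrightarrow> y \<in> P n \<Longrightarrow> x - y \<in> P n"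
  using P_add[of x n "- y"] P_minus by simp

lemma P_mult: "x \<in> P m \<Longrightarrow> y \<in> P n \<Longrightarrow> x * y \<in> P (m + n)"
  unfolding ideal_pow_def by (cases "x = 0"; cases "y = 0") (auto simp: val_mult)

lemma P_mult_0: "x \<in> P 0 \<Longrightarrow> y \<in> P 0 \<Longrightarrow> x * y \<in> P 0"
  using P_mult[of x 0 y 0] by simp

lemma P_mono: "x \<in> P n \<Longrightarrow> m \<le> n \<Longrightarrow> x \<in> P m"
  unfolding ideal_pow_def by auto

lemma P_sum: "(\<And>i. i \<in> I \<Longrightarrow> f i \<in> P n) \<Longrightarrow> sum f I \<in> P n"
  by (induction I rule: infinite_finite_induct) (auto intro: P_add)

lemma P_power: "x \<in> P 0 \<Longrightarrow> x ^ k \<in> P 0"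
  by (induction k) (auto intro: P_mult_0)

lemma val_ring_iff: "x \<in> val_ring v S \<longleftrightarrow> x \<in> S \<and> x \<in> P 0"
  by (auto simp: val_ring_def ideal_pow_def)

text \<open>Writing \<open>z = 1 + y\<close>, we have
  \<open>0 = z^e - 1 = y \<cdot> (1 + z + \<dots> + z^(e-1))\<close>, and the second factor is \<open>\<equiv> e\<close> modulo \<open>P 1\<close>,
  hence nonzero.\<close>
lemma tame_principal_root_of_unity:
  assumes e: "of_nat e \<noteq> (0::'a)" "v (of_nat e) = 0"
    and y: "y \<in> P 1" and root: "(1 + y) ^ e = 1"
  shows "y = 0"
proof -
  have power_congr: "(1 + y) ^ k - 1 \<in> P 1" for k
  proof (induction k)
    case (Suc k)
    have "(1 + y) * ((1 + y) ^ k - 1) \<in> P (0 + 1)"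
      using Suc P_add[OF P_one P_mono[OF y]] by (intro P_mult) simp_all
    moreover have "(1 + y) ^ Suc k - 1 = (1 + y) * ((1 + y) ^ k - 1) + y"
      by (simp add: algebra_simps)
    ultimately show ?case using P_add y by simp
  qed simp
  define S where "S = (\<Sum>k<e. (1 + y) ^ k)"
  have "S - of_nat e = (\<Sum>k<e. (1 + y) ^ k - 1)" by (simp add: S_def sum_subtractf)
  then have "S - of_nat e \<in> P 1" using power_congr by (simp add: P_sum)
  then have "S \<noteq> 0" using e unfolding ideal_pow_def by auto
  moreover have "y * S = (1 + y) ^ e - 1"
    using one_diff_power_eq[of "1 + y" e] by (simp add: S_def algebra_simps)
  ultimately show "y = 0" using root by simp
qed

end

lemma aut_add: "field_aut \<sigma> \<Longrightarrow> \<sigma> (x + y) = \<sigma> x + \<sigma> y" by (simp add: field_aut_def)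
lemma aut_mult: "field_aut \<sigma> \<Longrightarrow> \<sigma> (x * y) = \<sigma> x * \<sigma> y" by (simp add: field_aut_def)
lemma aut_one: "field_aut \<sigma> \<Longrightarrow> \<sigma> 1 = 1" by (simp add: field_aut_def)
lemma aut_inj: "field_aut \<sigma> \<Longrightarrow> inj \<sigma>" by (simp add: field_aut_def bij_is_inj)

lemma aut_zero:
  assumes "field_aut \<sigma>" shows "\<sigma> 0 = 0"
proof -
  have "\<sigma> 0 + \<sigma> 0 = \<sigma> 0 + 0" using aut_add[OF assms, of 0 0] by simp
  then show ?thesis by (rule add_left_imp_eq)
qed

lemma aut_nonzero: "field_aut \<sigma> \<Longrightarrow> x \<noteq> 0 \<Longrightarrow> \<sigma> x \<noteq> 0"
  using aut_inj[of \<sigma>] aut_zero[of \<sigma>] by (metis injD)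

lemma aut_sum: "field_aut \<sigma> \<Longrightarrow> \<sigma> (sum f A) = (\<Sum>i\<in>A. \<sigma> (f i))"
  by (induction A rule: infinite_finite_induct) (auto simp: aut_zero aut_add)

lemma aut_power: "field_aut \<sigma> \<Longrightarrow> \<sigma> (x ^ n) = \<sigma> x ^ n"
  by (induction n) (auto simp: aut_one aut_mult)

lemma aut_inverse:
  assumes "field_aut (\<sigma>::'a::field \<Rightarrow> 'a)"
  shows "\<sigma> (inverse x) = inverse (\<sigma> x)"
proof (cases "x = 0")
  case False
  then have "\<sigma> x * \<sigma> (inverse x) = 1" using aut_mult[OF assms, of x "inverse x"] aut_one[OF assms] by simp
  then show ?thesis using aut_nonzero[OF assms False] by (simp add: field_simps)
qed (simp add: aut_zero assms)

lemma aut_power_int: "field_aut (\<sigma>::'a::field \<Rightarrow> 'a) \<Longrightarrow> \<sigma> (x powi n) = \<sigma> x powi n"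
  by (cases "n \<ge> 0") (auto simp: power_int_def aut_power aut_inverse)

lemma aut_comp: "field_aut \<sigma> \<Longrightarrow> field_aut \<tau> \<Longrightarrow> field_aut (\<sigma> \<circ> \<tau>)"
  unfolding field_aut_def by (auto intro: bij_comp)


locale tame_extension = discrete_valuation v for v :: "'a::field \<Rightarrow> int" +
  fixes K :: "'a set" and e :: nat and \<pi>L \<pi>K :: 'a
  assumes subfield_K: "Defs.subfield K" and galois: "galois_ext K e"
    and total: "totally_ramified v K e" and tame: "tamely_ramified v K"
    and unif_L: "uniformizer v UNIV \<pi>L" and unif_K: "uniformizer v K \<pi>K"
    and root: "\<pi>L ^ e = \<pi>K"
begin

lemma K_zero: "0 \<in> K" and K_one: "1 \<in> K"
  using subfield_K by (simp_all add: Defs.subfield_def)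

lemma K_add: "x \<in> K \<Longrightarrow> y \<in> K \<Longrightarrow> x + y \<in> K"
  and K_diff: "x \<in> K \<Longrightarrow> y \<in> K \<Longrightarrow> x - y \<in> K"
  and K_mult: "x \<in> K \<Longrightarrow> y \<in> K \<Longrightarrow> x * y \<in> K"
  and K_inverse: "x \<in> K \<Longrightarrow> inverse x \<in> K"
  using subfield_K by (simp_all add: Defs.subfield_def)

lemma K_divide: "x \<in> K \<Longrightarrow> y \<in> K \<Longrightarrow> x / y \<in> K"
  by (simp add: divide_inverse K_mult K_inverse)

lemma K_power_int: "x \<in> K \<Longrightarrow> x powi n \<in> K"
proof -
  assume x: "x \<in> K"
  have "x ^ k \<in> K" for k by (induction k) (auto simp: K_one K_mult x)
  then show ?thesis by (cases "n \<ge> 0") (auto simp: power_int_def power_inverse K_inverse)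
qed

lemma K_sum: "(\<And>i. i \<in> A \<Longrightarrow> f i \<in> K) \<Longrightarrow> sum f A \<in> K"
  by (induction A rule: infinite_finite_induct) (auto simp: K_zero K_add)

lemma K_of_nat: "of_nat n \<in> K"
  by (induction n) (auto simp: K_zero K_one K_add)

lemma pi_L: "\<pi>L \<noteq> 0" "v \<pi>L = 1"
proof -
  show "\<pi>L \<noteq> 0" using unif_L by (simp add: uniformizer_def)
  obtain x where "x \<noteq> 0" "v x = 1" using val_surj by blast
  then show "v \<pi>L = 1" using unif_L by (force simp: uniformizer_def)
qed

lemma pi_K: "\<pi>K \<noteq> 0" "\<pi>K \<in> K" "v \<pi>K = int e"
  using unif_K root pi_L val_power[of \<pi>L e] by (auto simp: uniformizer_def)

lemma e_pos: "e > 0"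
  using unif_K pi_K by (auto simp: uniformizer_def)

lemma e_unit: "of_nat e \<noteq> (0::'a)" "v (of_nat e) = 0"
  using tame total by (auto simp: tamely_ramified_def totally_ramified_def val_units_def)

lemma P_pi_L: "\<pi>L ^ i \<in> P (int i)" "\<pi>L powi n \<in> P n"
  using pi_L by (auto simp: ideal_pow_def val_power val_power_int power_int_not_zero)

text \<open>Since \<open>\<pi>K\<close> is a uniformizer of \<open>K\<close> of valuation \<open>e\<close>, all valuations of \<open>K\<close> lie in \<open>e\<int>\<close>
  (reduce modulo \<open>e\<close> by multiplying with a power of \<open>\<pi>K\<close>).\<close>
lemma val_K_dvd: assumes "c \<in> K" "c \<noteq> 0" shows "int e dvd v c"
proof -
  define q where "q = v c div int e"
  define r where "r = v c mod int e"
  have r: "0 \<le> r" "r < int e" using e_pos by (auto simp: r_def)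
  define d where "d = c * \<pi>K powi (- q)"
  have d: "d \<in> K" "d \<noteq> 0" using assms pi_K by (auto simp: d_def K_mult K_power_int)
  have "v d = v c - q * int e"
    using assms pi_K by (simp add: d_def val_mult val_power_int power_int_not_zero)
  then have vd: "v d = r" by (simp add: q_def r_def minus_div_mult_eq_mod)
  have "r = 0"
  proof (rule ccontr)
    assume "r \<noteq> 0"
    then have "v \<pi>K \<le> v d" using unif_K d vd r by (auto simp: uniformizer_def)
    then show False using vd r pi_K by simp
  qed
  then show ?thesis by (simp add: r_def dvd_eq_mod_eq_0)
qed

abbreviation pi_comb :: "(nat \<Rightarrow> 'a) \<Rightarrow> 'a" where "pi_comb c \<equiv> (\<Sum>i<e. c i * \<pi>L ^ i)"

text \<open>The nonzero terms of an expansion with coefficients in \<open>K\<close> have valuations in distinct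
  classes modulo \<open>e\<close>; hence the expansion is nonzero and its valuation is the least one of a term.\<close>
lemma val_pi_comb:
  assumes K: "\<forall>i<e. c i \<in> K" and k: "k < e" "c k \<noteq> 0"
  shows "pi_comb c \<noteq> 0" "v (pi_comb c) \<le> v (c k) + int k"
proof -
  define I where "I = {i. i < e \<and> c i \<noteq> 0}"
  have I: "finite I" "I \<noteq> {}" "k \<in> I" using k by (auto simp: I_def)
  have sum_I: "pi_comb c = (\<Sum>i\<in>I. c i * \<pi>L ^ i)"
    by (rule sum.mono_neutral_right) (auto simp: I_def)
  have nz: "\<forall>i\<in>I. c i * \<pi>L ^ i \<noteq> 0" using pi_L by (auto simp: I_def)
  have val_term: "v (c i * \<pi>L ^ i) = v (c i) + int i" if "i \<in> I" for i
    using that pi_L by (auto simp: I_def val_mult val_power)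
  have "inj_on (\<lambda>i. v (c i * \<pi>L ^ i)) I"
  proof (rule inj_onI)
    fix i j assume ij: "i \<in> I" "j \<in> I" "v (c i * \<pi>L ^ i) = v (c j * \<pi>L ^ j)"
    then have "int i - int j = v (c j) - v (c i)" using val_term by simp
    moreover have "int e dvd v (c j) - v (c i)" using ij K by (auto simp: I_def intro!: dvd_diff val_K_dvd)
    ultimately have "int e dvd int i - int j" by simp
    moreover have "\<bar>int i - int j\<bar> < int e" using ij by (auto simp: I_def)
    ultimately show "i = j" using dvd_imp_le_int[of "int i - int j" "int e"] by force
  qed
  from val_sum_distinct[OF I(1,2) nz this] I(1,3)
  show "pi_comb c \<noteq> 0" "v (pi_comb c) \<le> v (c k) + int k"
    unfolding sum_I by (auto simp: val_term[symmetric])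
qed

lemma pi_comb_independent: "\<forall>i<e. c i \<in> K \<Longrightarrow> pi_comb c = 0 \<Longrightarrow> \<forall>i<e. c i = 0"
  using val_pi_comb(1) by blast

lemma pi_comb_coeffs_unique:
  assumes "\<forall>i<e. c i \<in> K" "\<forall>i<e. d i \<in> K" "pi_comb c = pi_comb d"
  shows "\<forall>i<e. c i = d i"
proof -
  have "pi_comb (\<lambda>i. c i - d i) = pi_comb c - pi_comb d"
    by (simp add: sum_subtractf algebra_simps)
  then have "\<forall>i<e. c i - d i = 0" using assms by (intro pi_comb_independent) (auto intro: K_diff)
  then show ?thesis by simp
qed

lemma pi_comb_exists: "\<exists>c. (\<forall>i<e. c i \<in> K) \<and> (\<forall>i\<ge>e. c i = 0) \<and> x = pi_comb c"
  using independent_family_spans[OF subfield_K _ pi_comb_independent] galois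
  by (auto simp: galois_ext_def)

text \<open>Integral elements have integral coordinates: \<open>v (c i) + i \<ge> v x \<ge> 0\<close> forces
  \<open>v (c i) > -e\<close>, and \<open>v (c i)\<close> is a multiple of \<open>e\<close>.\<close>
lemma integral_pi_comb_exists:
  assumes "x \<in> P 0"
  shows "\<exists>c. (\<forall>i<e. c i \<in> K \<and> c i \<in> P 0) \<and> (\<forall>i\<ge>e. c i = 0) \<and> x = pi_comb c"
proof -
  obtain c where c: "\<forall>i<e. c i \<in> K" "\<forall>i\<ge>e. c i = 0" "x = pi_comb c"
    using pi_comb_exists by blast
  have "c i \<in> P 0" if i: "i < e" for i
  proof (cases "c i = 0")
    case False
    have "0 \<le> v (pi_comb c)" "v (pi_comb c) \<le> v (c i) + int i"
      using val_pi_comb[OF c(1) i False] assms c(3) by (auto simp: ideal_pow_def)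
    then have "- int e < v (c i)" using i by simp
    moreover obtain k where k: "v (c i) = int e * k" using val_K_dvd c(1) i False by blast
    ultimately have "int e * (- 1) < int e * k" by simp
    then have "- 1 < k" using e_pos mult_less_cancel_left_pos[of "int e" "- 1" k] by simp
    then have "k \<ge> 0" by simp
    then have "v (c i) \<ge> 0" using k by simp
    then show ?thesis by (simp add: ideal_pow_def)
  qed simp
  then show ?thesis using c by blast
qed

lemma pi_comb_integral: "\<forall>i<e. c i \<in> P 0 \<Longrightarrow> pi_comb c \<in> P 0"
  using P_mult[OF _ P_mono[OF P_pi_L(1)]] by (intro P_sum) fastforce

end


text \<open>Every \<open>\<sigma> \<in> Gal K\<close> multiplies \<open>\<pi>L\<close> by an \<open>e\<close>-th root of unity \<open>zeta \<sigma>\<close>, since \<open>\<sigma>\<close> fixes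
  \<open>\<pi>K = \<pi>L ^ e\<close>.\<close>
context tame_extension
begin

lemma Gal_aut: "\<sigma> \<in> Gal K \<Longrightarrow> field_aut \<sigma>"
  and Gal_fix: "\<sigma> \<in> Gal K \<Longrightarrow> x \<in> K \<Longrightarrow> \<sigma> x = x"
  by (auto simp: Gal_def)

lemma Gal_finite: "finite (Gal K)" and Gal_card: "card (Gal K) = e"
  using galois by (auto simp: galois_ext_def)

lemma Gal_comp: "\<sigma> \<in> Gal K \<Longrightarrow> \<tau> \<in> Gal K \<Longrightarrow> \<sigma> \<circ> \<tau> \<in> Gal K"
  by (auto simp: Gal_def aut_comp)

definition zeta :: "('a \<Rightarrow> 'a) \<Rightarrow> 'a" where "zeta \<sigma> = \<sigma> \<pi>L / \<pi>L"

lemma aut_pi_L: "\<sigma> \<pi>L = zeta \<sigma> * \<pi>L"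
  using pi_L by (simp add: zeta_def)

lemma zeta_power_e: assumes "\<sigma> \<in> Gal K" shows "zeta \<sigma> ^ e = 1"
proof -
  have "\<sigma> \<pi>L ^ e = \<pi>L ^ e"
    using aut_power[OF Gal_aut[OF assms], of \<pi>L e] Gal_fix[OF assms pi_K(2)] root by simp
  then show ?thesis using pi_L by (simp add: zeta_def power_divide)
qed

lemma zeta_nonzero: "\<sigma> \<in> Gal K \<Longrightarrow> zeta \<sigma> \<noteq> 0"
  using zeta_power_e[of \<sigma>] e_pos by (auto simp: zero_power)

lemma zeta_val: assumes "\<sigma> \<in> Gal K" shows "v (zeta \<sigma>) = 0"
proof -
  have "int e * v (zeta \<sigma>) = 0"
    using val_power[OF zeta_nonzero[OF assms], of e] zeta_power_e[OF assms] by simp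
  then show ?thesis using e_pos by simp
qed

lemma zeta_integral: "\<sigma> \<in> Gal K \<Longrightarrow> zeta \<sigma> \<in> P 0"
  using zeta_val by (simp add: ideal_pow_def)

lemma aut_pi_comb:
  assumes \<sigma>: "\<sigma> \<in> Gal K" and c: "\<forall>i<e. c i \<in> K"
  shows "\<sigma> (pi_comb c) = (\<Sum>i<e. c i * zeta \<sigma> ^ i * \<pi>L ^ i)"
proof -
  have "\<sigma> (c i * \<pi>L ^ i) = c i * zeta \<sigma> ^ i * \<pi>L ^ i" if "i < e" for i
    using that c aut_mult[OF Gal_aut[OF \<sigma>]] aut_power[OF Gal_aut[OF \<sigma>]] Gal_fix[OF \<sigma>]
      aut_pi_L[of \<sigma>]
    by (simp add: power_mult_distrib mult.assoc)
  then show ?thesis by (auto simp: aut_sum[OF Gal_aut[OF \<sigma>]] intro!: sum.cong)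
qed

text \<open>An automorphism is determined by its value on \<open>\<pi>L\<close>, which generates \<open>L\<close> over \<open>K\<close>.\<close>
lemma zeta_inj: "inj_on zeta (Gal K)"
proof (rule inj_onI)
  fix \<sigma> \<tau> assume \<sigma>\<tau>: "\<sigma> \<in> Gal K" "\<tau> \<in> Gal K" "zeta \<sigma> = zeta \<tau>"
  show "\<sigma> = \<tau>"
  proof
    fix x
    obtain c where c: "\<forall>i<e. c i \<in> K" "x = pi_comb c" using pi_comb_exists by blast
    show "\<sigma> x = \<tau> x" using aut_pi_comb[OF \<sigma>\<tau>(1) c(1)] aut_pi_comb[OF \<sigma>\<tau>(2) c(1)] \<sigma>\<tau>(3) c(2) by simp
  qed
qed

text \<open>Each \<open>zeta \<sigma>\<close> is fixed by the Galois group: writing \<open>zeta \<sigma>\<close> in the integral basis shows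
  \<open>\<tau> (zeta \<sigma>) \<equiv> zeta \<sigma>\<close> modulo \<open>P 1\<close>, so \<open>\<tau> (zeta \<sigma>) / zeta \<sigma>\<close> is a principal unit and an
  \<open>e\<close>-th root of unity, which is \<open>1\<close> by tameness.\<close>
lemma zeta_fixed:
  assumes \<sigma>: "\<sigma> \<in> Gal K" and \<tau>: "\<tau> \<in> Gal K"
  shows "\<tau> (zeta \<sigma>) = zeta \<sigma>"
proof -
  let ?z = "zeta \<sigma>"
  obtain c where c: "\<forall>i<e. c i \<in> K \<and> c i \<in> P 0" "?z = pi_comb c"
    using integral_pi_comb_exists[OF zeta_integral[OF \<sigma>]] by blast
  have "\<tau> ?z - ?z = (\<Sum>i<e. c i * (zeta \<tau> ^ i - 1) * \<pi>L ^ i)"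
    using aut_pi_comb[OF \<tau>] c by (simp add: sum_subtractf[symmetric] algebra_simps)
  also have "\<dots> \<in> P 1"
  proof (rule P_sum)
    fix i assume i: "i \<in> {..<e}"
    show "c i * (zeta \<tau> ^ i - 1) * \<pi>L ^ i \<in> P 1"
    proof (cases "i = 0")
      case False
      have "c i * (zeta \<tau> ^ i - 1) \<in> P 0"
        using c i by (intro P_mult_0 P_diff P_power zeta_integral \<tau>) auto
      from P_mult[OF this P_pi_L(1)[of i]] show ?thesis using False by (auto intro: P_mono)
    qed simp
  qed
  finally have diff: "\<tau> ?z - ?z \<in> P 1" .
  define y where "y = (\<tau> ?z - ?z) * inverse ?z"
  have "y \<in> P 1"
    using P_mult[OF diff, of "inverse ?z" 0] zeta_nonzero[OF \<sigma>] zeta_val[OF \<sigma>]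
    by (simp add: y_def ideal_pow_def val_inverse)
  moreover have "(1 + y) ^ e = \<tau> (?z ^ e) / ?z ^ e"
    using zeta_nonzero[OF \<sigma>] by (simp add: y_def field_simps power_divide aut_power[OF Gal_aut[OF \<tau>]])
  then have "(1 + y) ^ e = 1" using zeta_power_e[OF \<sigma>] aut_one[OF Gal_aut[OF \<tau>]] by simp
  ultimately have "y = 0" by (rule tame_principal_root_of_unity[OF e_unit])
  then show ?thesis using zeta_nonzero[OF \<sigma>] by (simp add: y_def)
qed

lemma zeta_comp:
  assumes \<sigma>: "\<sigma> \<in> Gal K" and \<tau>: "\<tau> \<in> Gal K"
  shows "zeta (\<sigma> \<circ> \<tau>) = zeta \<sigma> * zeta \<tau>"
proof -
  have "(\<sigma> \<circ> \<tau>) \<pi>L = \<sigma> (zeta \<tau> * \<pi>L)" using aut_pi_L[of \<tau>] by simp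
  also have "\<dots> = zeta \<tau> * (zeta \<sigma> * \<pi>L)"
    using aut_mult[OF Gal_aut[OF \<sigma>]] zeta_fixed[OF \<tau> \<sigma>] aut_pi_L[of \<sigma>] by simp
  finally show ?thesis using pi_L by (simp add: zeta_def)
qed

text \<open>Orthogonality: the characters \<open>zeta powi m\<close> with \<open>0 < \<bar>m\<bar> < e\<close> are nontrivial, because
  \<open>zeta\<close> is injective and there are fewer than \<open>e\<close> roots of unity of order dividing \<open>\<bar>m\<bar>\<close>.\<close>
lemma character_sum:
  assumes m: "- int e < m" "m < int e" "m \<noteq> 0"
  shows "(\<Sum>\<sigma>\<in>Gal K. zeta \<sigma> powi m) = 0"
proof -
  have "\<exists>\<sigma>\<in>Gal K. zeta \<sigma> powi m \<noteq> 1"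
  proof (rule ccontr)
    assume "\<not> ?thesis"
    then have roots: "zeta ` Gal K \<subseteq> {z. z ^ nat \<bar>m\<bar> = 1}"
      by (auto intro: power_int_eq_1_abs)
    have "finite {z::'a. z ^ nat \<bar>m\<bar> = 1}" using roots_of_unity_card(1)[of "nat \<bar>m\<bar>"] m(3) by simp
    then have "card (zeta ` Gal K) \<le> card {z::'a. z ^ nat \<bar>m\<bar> = 1}"
      using roots by (rule card_mono)
    also have "\<dots> \<le> nat \<bar>m\<bar>" using roots_of_unity_card(2)[of "nat \<bar>m\<bar>"] m(3) by simp
    finally have "card (zeta ` Gal K) \<le> nat \<bar>m\<bar>" .
    moreover have "card (zeta ` Gal K) = e" using card_image[OF zeta_inj] Gal_card by simp
    ultimately show False using m by linarith
  qed
  then obtain \<sigma> where \<sigma>: "\<sigma> \<in> Gal K" "zeta \<sigma> powi m \<noteq> 1" by blast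
  have inj: "inj_on ((\<circ>) \<sigma>) (Gal K)"
    using aut_inj[OF Gal_aut[OF \<sigma>(1)]] by (auto simp: inj_on_def inj_def fun_eq_iff)
  have "(\<circ>) \<sigma> ` Gal K = Gal K"
    by (rule endo_inj_surj[OF Gal_finite _ inj]) (auto intro: Gal_comp[OF \<sigma>(1)])
  then have "(\<Sum>\<tau>\<in>Gal K. zeta \<tau> powi m) = (\<Sum>\<tau>\<in>Gal K. zeta (\<sigma> \<circ> \<tau>) powi m)"
    using sum.reindex[OF inj, of "\<lambda>\<tau>. zeta \<tau> powi m"] by simp
  also have "\<dots> = zeta \<sigma> powi m * (\<Sum>\<tau>\<in>Gal K. zeta \<tau> powi m)"
    by (simp add: sum_distrib_left zeta_comp[OF \<sigma>(1)] power_int_mult_distrib)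
  finally have "(1 - zeta \<sigma> powi m) * (\<Sum>\<tau>\<in>Gal K. zeta \<tau> powi m) = 0" by (simp add: algebra_simps)
  then show ?thesis using \<sigma>(2) by simp
qed

lemma trace_pi_comb:
  assumes c: "\<forall>i<e. c i \<in> K"
  shows "(\<Sum>\<sigma>\<in>Gal K. \<sigma> (pi_comb c)) = of_nat e * c 0"
proof -
  have char: "(\<Sum>\<sigma>\<in>Gal K. zeta \<sigma> ^ i) = (if i = 0 then of_nat e else 0)" if "i < e" for i
    using character_sum[of "int i"] that Gal_card by simp
  have "(\<Sum>\<sigma>\<in>Gal K. \<sigma> (pi_comb c)) = (\<Sum>\<sigma>\<in>Gal K. \<Sum>i<e. c i * zeta \<sigma> ^ i * \<pi>L ^ i)"
    using aut_pi_comb c by simp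
  also have "\<dots> = (\<Sum>i<e. c i * \<pi>L ^ i * (\<Sum>\<sigma>\<in>Gal K. zeta \<sigma> ^ i))"
    by (subst sum.swap) (simp add: sum_distrib_left algebra_simps)
  also have "\<dots> = (\<Sum>i<e. if i = 0 then c i * of_nat e else 0)"
    by (rule sum.cong) (simp_all add: char)
  also have "\<dots> = of_nat e * c 0" using e_pos by (simp add: mult.commute)
  finally show ?thesis .
qed

text \<open>Since \<open>e\<close> is invertible, an element fixed by the Galois group equals its normalized trace,
  which lies in \<open>K\<close>.\<close>
lemma Gal_fixed_in_K:
  assumes fixed: "\<And>\<tau>. \<tau> \<in> Gal K \<Longrightarrow> \<tau> x = x"
  shows "x \<in> K"
proof -
  obtain c where c: "\<forall>i<e. c i \<in> K" "x = pi_comb c" using pi_comb_exists by blast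
  have "of_nat e * x = (\<Sum>\<tau>\<in>Gal K. x)" using Gal_card by simp
  also have "\<dots> = (\<Sum>\<tau>\<in>Gal K. \<tau> x)" by (rule sum.cong) (simp_all add: fixed)
  also have "\<dots> = of_nat e * c 0" using trace_pi_comb[OF c(1)] c(2) by simp
  finally have "x = c 0" using e_unit by simp
  then show ?thesis using c e_pos by simp
qed

lemma zeta_in_K: "\<sigma> \<in> Gal K \<Longrightarrow> zeta \<sigma> \<in> K"
  using zeta_fixed by (blast intro: Gal_fixed_in_K)

end


text \<open>For \<open>a : G \<rightarrow> K\<close>,
  \<open>\<Sum>\<sigma> a \<sigma> \<cdot> \<sigma> (\<pi>L^n \<cdot> \<Sum>\<^sub>i u i \<pi>L^i) = \<pi>L^n \<cdot> \<Sum>\<^sub>i u i \<cdot> dft n a i \<cdot> \<pi>L^i\<close>, where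
  \<open>dft n a i = \<Sum>\<sigma> a \<sigma> \<cdot> zeta \<sigma> ^ (n + i)\<close> is a discrete Fourier transform on \<open>G\<close>.  By the
  orthogonality relations for \<open>zeta\<close> the transform is invertible with inverse \<open>idft n\<close>, and both
  preserve integrality because \<open>e\<close> and all \<open>zeta \<sigma>\<close> are units.\<close>
context tame_extension
begin

definition dft :: "int \<Rightarrow> (('a \<Rightarrow> 'a) \<Rightarrow> 'a) \<Rightarrow> nat \<Rightarrow> 'a" where
  "dft n a i = (\<Sum>\<sigma>\<in>Gal K. a \<sigma> * zeta \<sigma> powi (n + int i))"

definition idft :: "int \<Rightarrow> (nat \<Rightarrow> 'a) \<Rightarrow> ('a \<Rightarrow> 'a) \<Rightarrow> 'a" where
  "idft n t \<sigma> = (if \<sigma> \<in> Gal K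
     then inverse (of_nat e) * (\<Sum>i<e. t i * zeta \<sigma> powi (- (n + int i))) else 0)"

lemma zeta_power_int:
  assumes "\<sigma> \<in> Gal K"
  shows "zeta \<sigma> powi m \<in> K" "zeta \<sigma> powi m \<in> P 0" "zeta \<sigma> powi m \<noteq> 0"
  using zeta_in_K[OF assms] zeta_nonzero[OF assms] zeta_val[OF assms]
  by (auto simp: K_power_int ideal_pow_def val_power_int power_int_not_zero)

text \<open>The two orthogonality relations making \<open>idft n\<close> a two-sided inverse of \<open>dft n\<close>:
  over the exponents, by the geometric series for the root of unity \<open>zeta \<tau> / zeta \<sigma>\<close>;
  over the group, by \<open>character_sum\<close>.\<close>
lemma orthogonality_rows:
  assumes \<sigma>: "\<sigma> \<in> Gal K" and \<tau>: "\<tau> \<in> Gal K"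
  shows "(\<Sum>i<e. zeta \<tau> powi (n + int i) * zeta \<sigma> powi (- (n + int i)))
    = (if \<tau> = \<sigma> then of_nat e else 0)"
proof -
  define \<rho> where "\<rho> = zeta \<tau> / zeta \<sigma>"
  have nz: "\<rho> \<noteq> 0" using zeta_nonzero[OF \<sigma>] zeta_nonzero[OF \<tau>] by (simp add: \<rho>_def)
  have "zeta \<tau> powi (n + int i) * zeta \<sigma> powi (- (n + int i)) = \<rho> powi (n + int i)" for i
    by (simp only: \<rho>_def divide_inverse power_int_mult_distrib power_int_inverse power_int_minus)
  also have "\<rho> powi (n + int i) = \<rho> powi n * \<rho> ^ i" for i
    using nz by (simp add: power_int_add)
  finally have "(\<Sum>i<e. zeta \<tau> powi (n + int i) * zeta \<sigma> powi (- (n + int i)))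
    = \<rho> powi n * (\<Sum>i<e. \<rho> ^ i)"
    by (simp add: sum_distrib_left)
  moreover have "(\<Sum>i<e. \<rho> ^ i) = 0" if "\<tau> \<noteq> \<sigma>"
  proof -
    have "\<rho> \<noteq> 1"
      using that zeta_inj \<sigma> \<tau> zeta_nonzero[OF \<sigma>] by (auto simp: \<rho>_def inj_on_def)
    moreover have "\<rho> ^ e = 1" using zeta_power_e \<sigma> \<tau> by (simp add: \<rho>_def power_divide)
    ultimately show ?thesis using one_diff_power_eq[of \<rho> e] by simp
  qed
  moreover have "\<rho> = 1" if "\<tau> = \<sigma>" using that zeta_nonzero[OF \<sigma>] by (simp add: \<rho>_def)
  ultimately show ?thesis by auto
qed

lemma orthogonality_columns:
  assumes "i < e" "j < e"
  shows "(\<Sum>\<sigma>\<in>Gal K. zeta \<sigma> powi (n + int i) * zeta \<sigma> powi (- (n + int j)))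
    = (if i = j then of_nat e else 0)"
proof -
  have "(\<Sum>\<sigma>\<in>Gal K. zeta \<sigma> powi (n + int i) * zeta \<sigma> powi (- (n + int j)))
    = (\<Sum>\<sigma>\<in>Gal K. zeta \<sigma> powi (int i - int j))"
    using zeta_nonzero by (intro sum.cong) (simp_all add: power_int_add[symmetric])
  also have "\<dots> = (if i = j then of_nat e else 0)"
    using character_sum[of "int i - int j"] assms Gal_card by auto
  finally show ?thesis .
qed

lemma dft_integral:
  assumes "\<forall>\<sigma>\<in>Gal K. a \<sigma> \<in> K \<and> a \<sigma> \<in> P 0"
  shows "dft n a i \<in> K" "dft n a i \<in> P 0"
  unfolding dft_def using assms zeta_power_int
  by (auto intro!: K_sum K_mult P_sum P_mult_0)

lemma dft_left_inverse:
  assumes \<sigma>: "\<sigma> \<in> Gal K"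
  shows "(\<Sum>i<e. dft n a i * zeta \<sigma> powi (- (n + int i))) = of_nat e * a \<sigma>"
proof -
  have "(\<Sum>i<e. dft n a i * zeta \<sigma> powi (- (n + int i)))
      = (\<Sum>i<e. \<Sum>\<tau>\<in>Gal K. a \<tau> * (zeta \<tau> powi (n + int i) * zeta \<sigma> powi (- (n + int i))))"
    unfolding dft_def by (simp add: sum_distrib_right mult.assoc)
  also have "\<dots> = (\<Sum>\<tau>\<in>Gal K. a \<tau> * (\<Sum>i<e. zeta \<tau> powi (n + int i) * zeta \<sigma> powi (- (n + int i))))"
    by (subst sum.swap) (simp add: sum_distrib_left)
  also have "\<dots> = (\<Sum>\<tau>\<in>Gal K. if \<tau> = \<sigma> then a \<tau> * of_nat e else 0)"
    using orthogonality_rows[OF \<sigma>] by (intro sum.cong) simp_all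
  also have "\<dots> = of_nat e * a \<sigma>" using \<sigma> Gal_finite by (simp add: mult.commute)
  finally show ?thesis .
qed

lemma dft_idft:
  assumes "j < e"
  shows "dft n (idft n t) j = t j"
proof -
  have "dft n (idft n t) j
      = inverse (of_nat e) * (\<Sum>i<e. t i *
          (\<Sum>\<sigma>\<in>Gal K. zeta \<sigma> powi (n + int j) * zeta \<sigma> powi (- (n + int i))))"
    unfolding dft_def idft_def
    by (simp add: sum_distrib_left sum_distrib_right mult_ac sum.swap[of _ "Gal K"])
  also have "(\<Sum>i<e. t i * (\<Sum>\<sigma>\<in>Gal K. zeta \<sigma> powi (n + int j) * zeta \<sigma> powi (- (n + int i))))
      = (\<Sum>i<e. if i = j then t i * of_nat e else 0)"
    using orthogonality_columns[OF assms] by (intro sum.cong) auto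
  also have "inverse (of_nat e) * (\<Sum>i<e. if i = j then t i * of_nat e else 0) = t j"
    using assms e_unit by simp
  finally show ?thesis .
qed

text \<open>\<open>idft\<close> preserves integrality because \<open>e\<close> is a unit (tameness).\<close>
lemma idft_integral:
  assumes "\<forall>i<e. t i \<in> K \<and> t i \<in> P 0"
  shows "idft n t \<sigma> \<in> val_ring v K"
proof (cases "\<sigma> \<in> Gal K")
  case True
  have "inverse (of_nat e) \<in> K" "inverse (of_nat e :: 'a) \<in> P 0"
    using K_of_nat e_unit by (auto intro: K_inverse simp: ideal_pow_def val_inverse)
  then show ?thesis
    unfolding idft_def val_ring_iff using True assms zeta_power_int
    by (auto intro!: K_sum K_mult P_sum P_mult_0)
qed (simp add: idft_def val_ring_iff K_zero)

lemma aut_generator: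
  assumes \<sigma>: "\<sigma> \<in> Gal K" and u: "\<forall>i<e. u i \<in> K"
  shows "\<sigma> (\<pi>L powi n * pi_comb u) = \<pi>L powi n * (\<Sum>i<e. u i * zeta \<sigma> powi (n + int i) * \<pi>L ^ i)"
proof -
  have "\<sigma> (\<pi>L powi n * pi_comb u) = \<sigma> (\<pi>L powi n) * \<sigma> (pi_comb u)"
    by (rule aut_mult[OF Gal_aut[OF \<sigma>]])
  also have "\<dots> = \<pi>L powi n * zeta \<sigma> powi n * (\<Sum>i<e. u i * zeta \<sigma> ^ i * \<pi>L ^ i)"
    using aut_power_int[OF Gal_aut[OF \<sigma>]] aut_pi_L[of \<sigma>] aut_pi_comb[OF \<sigma> u]
    by (simp add: power_int_mult_distrib)
  also have "\<dots> = \<pi>L powi n * (\<Sum>i<e. u i * zeta \<sigma> powi (n + int i) * \<pi>L ^ i)"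
    using zeta_nonzero[OF \<sigma>] by (simp add: sum_distrib_left power_int_add mult_ac)
  finally show ?thesis .
qed

lemma group_ring_action:
  assumes u: "\<forall>i<e. u i \<in> K"
  shows "(\<Sum>\<sigma>\<in>Gal K. a \<sigma> * \<sigma> (\<pi>L powi n * pi_comb u)) = \<pi>L powi n * pi_comb (\<lambda>i. u i * dft n a i)"
proof -
  have "(\<Sum>\<sigma>\<in>Gal K. a \<sigma> * \<sigma> (\<pi>L powi n * pi_comb u))
     = (\<Sum>\<sigma>\<in>Gal K. a \<sigma> * (\<pi>L powi n * (\<Sum>i<e. u i * zeta \<sigma> powi (n + int i) * \<pi>L ^ i)))"
    by (rule sum.cong) (simp_all add: aut_generator u)
  also have "\<dots> = \<pi>L powi n * (\<Sum>\<sigma>\<in>Gal K. \<Sum>i<e. a \<sigma> * (u i * zeta \<sigma> powi (n + int i) * \<pi>L ^ i))"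
    by (simp add: sum_distrib_left mult.left_commute)
  also have "\<dots> = \<pi>L powi n * pi_comb (\<lambda>i. u i * dft n a i)"
    unfolding dft_def by (subst sum.swap) (simp add: sum_distrib_left sum_distrib_right mult_ac)
  finally show ?thesis .
qed

end


context tame_extension
begin

lemma integral_coordinates:
  assumes "\<alpha> \<in> val_ring v UNIV"
  shows "\<exists>!u. (\<forall>i<e. u i \<in> val_ring v K) \<and> (\<forall>i\<ge>e. u i = 0) \<and> \<alpha> = pi_comb u"
proof -
  obtain c where c: "\<forall>i<e. c i \<in> K \<and> c i \<in> P 0" "\<forall>i\<ge>e. c i = 0" "\<alpha> = pi_comb c"
    using integral_pi_comb_exists assms by (auto simp: val_ring_iff)
  show ?thesis
  proof (rule ex1I[of _ c])
    show "(\<forall>i<e. c i \<in> val_ring v K) \<and> (\<forall>i\<ge>e. c i = 0) \<and> \<alpha> = pi_comb c"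
      using c by (simp add: val_ring_iff)
    fix d assume d: "(\<forall>i<e. d i \<in> val_ring v K) \<and> (\<forall>i\<ge>e. d i = 0) \<and> \<alpha> = pi_comb d"
    then have "\<forall>i<e. d i = c i" using c by (intro pi_comb_coeffs_unique) (auto simp: val_ring_iff)
    then show "d = c"
    proof (intro ext)
      fix i show "d i = c i" using \<open>\<forall>i<e. d i = c i\<close> c(2) d by (cases "i < e") auto
    qed
  qed
qed

lemma group_ring_action_in_ideal:
  assumes u: "\<forall>i<e. u i \<in> K \<and> u i \<in> P 0" and a: "\<forall>\<sigma>\<in>Gal K. a \<sigma> \<in> val_ring v K"
  shows "(\<Sum>\<sigma>\<in>Gal K. a \<sigma> * \<sigma> (\<pi>L powi n * pi_comb u)) \<in> P n"
proof -
  have "pi_comb (\<lambda>i. u i * dft n a i) \<in> P 0"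
    using u a dft_integral[of a n] by (intro pi_comb_integral) (auto simp: val_ring_iff P_mult_0)
  from P_mult[OF P_pi_L(2) this] show ?thesis using group_ring_action u by simp
qed

text \<open>If all coordinates \<open>u i\<close> are nonzero, the group ring element acting is determined by
  the result: the coordinates determine \<open>dft n a\<close>, and \<open>dft n\<close> is injective.\<close>
lemma group_ring_action_inj:
  assumes u: "\<forall>i<e. u i \<in> K \<and> u i \<noteq> 0"
    and a: "\<forall>\<sigma>\<in>Gal K. a \<sigma> \<in> K \<and> a \<sigma> \<in> P 0" and b: "\<forall>\<sigma>\<in>Gal K. b \<sigma> \<in> K \<and> b \<sigma> \<in> P 0"
    and eq: "(\<Sum>\<sigma>\<in>Gal K. a \<sigma> * \<sigma> (\<pi>L powi n * pi_comb u))
      = (\<Sum>\<sigma>\<in>Gal K. b \<sigma> * \<sigma> (\<pi>L powi n * pi_comb u))"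
    and \<sigma>: "\<sigma> \<in> Gal K"
  shows "a \<sigma> = b \<sigma>"
proof -
  have "pi_comb (\<lambda>i. u i * dft n a i) = pi_comb (\<lambda>i. u i * dft n b i)"
    using eq group_ring_action[of u a n] group_ring_action[of u b n] u pi_L
    by (simp add: power_int_not_zero)
  then have "\<forall>i<e. u i * dft n a i = u i * dft n b i"
    using u dft_integral(1)[OF a] dft_integral(1)[OF b] by (intro pi_comb_coeffs_unique) (auto intro: K_mult)
  then have "\<forall>i<e. dft n a i = dft n b i" using u by simp
  then have "of_nat e * a \<sigma> = of_nat e * b \<sigma>"
    using dft_left_inverse[OF \<sigma>, of n a] dft_left_inverse[OF \<sigma>, of n b] by simp
  then show ?thesis using e_unit by simp
qed

text \<open>If all coordinates \<open>u i\<close> are units, every element of \<open>P n\<close> is reached: divide its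
  coordinates by those of \<open>u\<close> and apply the inverse transform.\<close>
lemma group_ring_action_surj:
  assumes u: "\<forall>i<e. u i \<in> val_units v K" and y: "y \<in> P n"
  shows "\<exists>a. (\<forall>\<sigma>\<in>Gal K. a \<sigma> \<in> val_ring v K) \<and> (\<forall>\<sigma>. \<sigma> \<notin> Gal K \<longrightarrow> a \<sigma> = 0) \<and>
    y = (\<Sum>\<sigma>\<in>Gal K. a \<sigma> * \<sigma> (\<pi>L powi n * pi_comb u))"
proof -
  have "y * \<pi>L powi (- n) \<in> P 0" using P_mult[OF y P_pi_L(2)[of "- n"]] by simp
  then obtain w where w: "\<forall>i<e. w i \<in> K \<and> w i \<in> P 0" "y * \<pi>L powi (- n) = pi_comb w"
    using integral_pi_comb_exists by blast
  have y_eq: "y = \<pi>L powi n * pi_comb w"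
    using w(2) pi_L by (simp add: power_int_minus field_simps power_int_not_zero)
  define t where "t i = w i / u i" for i
  have t: "\<forall>i<e. t i \<in> K \<and> t i \<in> P 0"
  proof (intro allI impI conjI)
    fix i assume i: "i < e"
    then show "t i \<in> K" using w u by (simp add: t_def val_units_def K_divide)
    show "t i \<in> P 0"
    proof (cases "w i = 0")
      case False
      then have "v (t i) = v (w i)" using u i by (simp add: t_def val_units_def val_divide)
      moreover have "w i \<in> P 0" using w i by simp
      ultimately show ?thesis using False by (simp add: ideal_pow_def)
    qed (simp add: t_def)
  qed
  have "(\<Sum>\<sigma>\<in>Gal K. idft n t \<sigma> * \<sigma> (\<pi>L powi n * pi_comb u))
      = \<pi>L powi n * pi_comb (\<lambda>i. u i * dft n (idft n t) i)"
    using u by (intro group_ring_action) (simp add: val_units_def)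
  also have "\<dots> = y"
    unfolding y_eq using u by (auto simp: dft_idft t_def val_units_def intro!: sum.cong)
  finally have "y = (\<Sum>\<sigma>\<in>Gal K. idft n t \<sigma> * \<sigma> (\<pi>L powi n * pi_comb u))" ..
  moreover have "\<forall>\<sigma>. \<sigma> \<notin> Gal K \<longrightarrow> idft n t \<sigma> = 0" by (simp add: idft_def)
  moreover have "\<forall>\<sigma>\<in>Gal K. idft n t \<sigma> \<in> val_ring v K" using idft_integral[OF t] by blast
  ultimately show ?thesis by blast
qed

lemma group_ring_action_unique_preimage:
  assumes u: "\<forall>i<e. u i \<in> val_units v K" and y: "y \<in> P n"
  shows "\<exists>!a. (\<forall>\<sigma>\<in>Gal K. a \<sigma> \<in> val_ring v K) \<and> (\<forall>\<sigma>. \<sigma> \<notin> Gal K \<longrightarrow> a \<sigma> = 0) \<and>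
    y = (\<Sum>\<sigma>\<in>Gal K. a \<sigma> * \<sigma> (\<pi>L powi n * pi_comb u))" (is "\<exists>!a. ?preimage a")
proof -
  have u': "\<forall>i<e. u i \<in> K \<and> u i \<noteq> 0" using u by (simp add: val_units_def)
  have "a \<sigma> = b \<sigma>" if "?preimage a" "?preimage b" for a b \<sigma>
  proof (cases "\<sigma> \<in> Gal K")
    case True
    then show ?thesis
      using that by (intro group_ring_action_inj[OF u' _ _ _ True, of a b n]) (auto simp: val_ring_iff)
  qed (use that in auto)
  then show ?thesis using group_ring_action_surj[OF u y] by blast
qed

lemma free_generator_if_unit_coordinates:
  assumes u: "\<forall>i<e. u i \<in> val_units v K"
  shows "free_generator v K (Gal K) n (\<pi>L powi n * pi_comb u)"
proof -
  have "\<forall>i<e. u i \<in> K \<and> u i \<in> P 0" using u by (simp add: val_units_def ideal_pow_def)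
  then show ?thesis
    unfolding free_generator_def
    using group_ring_action_in_ideal group_ring_action_unique_preimage[OF u] by blast
qed

text \<open>Conversely, if \<open>\<pi>L^n \<cdot> pi_comb u\<close> generates \<open>P n\<close>, then \<open>\<pi>L^(n+k)\<close> is reached for each
  \<open>k < e\<close>; comparing \<open>k\<close>-th coordinates gives \<open>u k \<cdot> dft n a k = 1\<close> with both factors
  integral, so \<open>u k\<close> is a unit.\<close>
lemma unit_coordinates_if_free_generator:
  assumes u: "\<forall>i<e. u i \<in> K \<and> u i \<in> P 0"
    and free: "free_generator v K (Gal K) n (\<pi>L powi n * pi_comb u)"
    and k: "k < e"
  shows "u k \<in> val_units v K"
proof -
  have "\<pi>L powi (n + int k) \<in> ideal_pow v n"
    using P_pi_L(2)[of "n + int k"] by (auto intro: P_mono)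
  then obtain a where a: "\<forall>\<sigma>\<in>Gal K. a \<sigma> \<in> val_ring v K"
    "\<pi>L powi (n + int k) = (\<Sum>\<sigma>\<in>Gal K. a \<sigma> * \<sigma> (\<pi>L powi n * pi_comb u))"
    using free unfolding free_generator_def by blast
  have aO: "\<forall>\<sigma>\<in>Gal K. a \<sigma> \<in> K \<and> a \<sigma> \<in> P 0" using a(1) by (simp add: val_ring_iff)
  have "\<pi>L powi n * pi_comb (\<lambda>i. if i = k then 1 else 0) = \<pi>L powi n * \<pi>L ^ k"
    using k by (simp add: if_distrib[of "\<lambda>x. x * _"] cong: if_cong)
  also have "\<dots> = \<pi>L powi n * pi_comb (\<lambda>i. u i * dft n a i)"
    using a(2) group_ring_action[of u a n] u pi_L by (simp add: power_int_add)
  finally have "\<forall>i<e. (if i = k then 1 else 0) = u i * dft n a i"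
    using u dft_integral[OF aO] pi_L
    by (intro pi_comb_coeffs_unique) (auto intro: K_zero K_one K_mult simp: power_int_not_zero)
  then have one: "u k * dft n a k = 1" using k by (metis (full_types))
  then have nz: "u k \<noteq> 0" "dft n a k \<noteq> 0" by auto
  have "v (u k) + v (dft n a k) = 0" using val_mult[OF nz] one by simp
  moreover have "u k \<in> P 0" using u k by simp
  then have "v (u k) \<ge> 0" using nz by (simp add: ideal_pow_def)
  moreover have "v (dft n a k) \<ge> 0" using dft_integral(2)[OF aO, of n k] nz by (simp add: ideal_pow_def)
  ultimately show "u k \<in> val_units v K" using nz u k by (simp add: val_units_def)
qed

end


theorem proposition2p4:
  fixes v :: "'a::field \<Rightarrow> int" and K :: "'a set" and e :: nat and \<pi>L \<pi>K :: 'a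
  assumes "normalized_dvf v" and "subfield K"
    and "v_complete v UNIV" and "v_complete v K"
    and "finite_residue_field v UNIV" and "finite_residue_field v K"
    and "galois_ext K e"
    and "totally_ramified v K e" and "tamely_ramified v K"
    and "uniformizer v UNIV \<pi>L" and "uniformizer v K \<pi>K" and "\<pi>L ^ e = \<pi>K"
  shows "(\<forall>\<alpha>\<in>val_ring v UNIV. \<exists>!u. (\<forall>i<e. u i \<in> val_ring v K) \<and> (\<forall>i\<ge>e. u i = 0) \<and>
            \<alpha> = (\<Sum>i<e. u i * \<pi>L ^ i))
       \<and> (\<forall>\<alpha> u. (\<forall>i<e. u i \<in> val_ring v K) \<longrightarrow> \<alpha> = (\<Sum>i<e. u i * \<pi>L ^ i) \<longrightarrow>
            (\<forall>n::int. free_generator v K (Gal K) n (\<pi>L powi n * \<alpha>)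
                 \<longleftrightarrow> (\<forall>i<e. u i \<in> val_units v K)))
       \<and> (\<forall>n::int. free_generator v K (Gal K) n (\<pi>L powi n * (\<Sum>i<e. \<pi>L ^ i)))"
proof -
  interpret tame_extension v K e \<pi>L \<pi>K
    using assms by unfold_locales (auto simp: discrete_valuation_def)
  have criterion: "free_generator v K (Gal K) n (\<pi>L powi n * (\<Sum>i<e. u i * \<pi>L ^ i))
      \<longleftrightarrow> (\<forall>i<e. u i \<in> val_units v K)" if u: "\<forall>i<e. u i \<in> val_ring v K" for u n
  proof -
    have "\<forall>i<e. u i \<in> K \<and> u i \<in> P 0" using u by (simp add: val_ring_iff)
    then show ?thesis
      using free_generator_if_unit_coordinates unit_coordinates_if_free_generator by blast
  qed
  have "free_generator v K (Gal K) n (\<pi>L powi n * (\<Sum>i<e. 1 * \<pi>L ^ i))" for n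
    using K_one by (intro free_generator_if_unit_coordinates) (simp add: val_units_def)
  then show ?thesis using integral_coordinates criterion by simp
qed

end
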